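(* Let $e, e_1, e_2, e'_1$ be terms of $\mathrm{F}_H$ and $x$ a variable. If $e_1 \longrightarrow e_2$ and $e[e_1/x] \longrightarrow e'_1$, then there exists a term $e'$ such that $e[e_2/x] \longrightarrow^* e'[e_2/x]$ and $e'_1 \longrightarrow^* e'[e_1/x]$.
   Context: Syntax of the calculus $\mathrm{F}_H$. Fix a set of base types $B$ containing $\mathsf{Bool}$; each base type $B$ has a set $\mathcal{K}_B$ of constants (with $\mathcal{K}_{\mathsf{Bool}}=\{\mathsf{true},\mathsf{false}\}$); $k$ ranges over constants. Fix primitive operations $\mathtt{op}$, each with a denotation $[\![\mathtt{op}]\!]$, a partial function from tuples of constants to constants. Types: $T ::= B \mid \alpha \mid x{:}T_1\to T_2 \mid \forall\alpha.T \mid \{x{:}T \mid e\}$. Values: $v ::= k \mid \lambda x{:}T.e \mid \Lambda\alpha.e \mid \langle T_1\Rightarrow T_2\rangle^{\ell}$ ($\ell$ ranges over blame labels). Terms: $e ::= v \mid x \mid \mathtt{op}(e_1,\dots,e_n) \mid e_1\,e_2 \mid e\,T \mid \langle\!\langle \{x{:}T_1\mid e_1\}, e_2\rangle\!\rangle^{\ell} \mid \langle \{x{:}T_1\mid e_1\}, e_2, v\rangle^{\ell} \mid \Uparrow\ell$. Variables are not values. Substitution $e[e'/x]$ is capture-avoiding; $\mathsf{let}\ y{:}T = e_1\ \mathsf{in}\ e_2$ abbreviates $(\lambda y{:}T.e_2)\,e_1$. Reduction $\rightsquigarrow$: $\mathtt{op}(k_1,\dots,k_n)\rightsquigarrow[\![\mathtt{op}]\!](k_1,\dots,k_n)$;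 $(\lambda x{:}T.e)\,v\rightsquigarrow e[v/x]$; $(\Lambda\alpha.e)\,T\rightsquigarrow e[T/\alpha]$; $\langle B\Rightarrow B\rangle^\ell v\rightsquigarrow v$; $\langle x{:}T_{11}\to T_{12}\Rightarrow x{:}T_{21}\to T_{22}\rangle^\ell v\rightsquigarrow \lambda x{:}T_{21}.\,\mathsf{let}\ y{:}T_{11}=\langle T_{21}\Rightarrow T_{11}\rangle^\ell x\ \mathsf{in}\ \langle T_{12}[y/x]\Rightarrow T_{22}\rangle^\ell (v\,y)$ with $y$ fresh; $\langle\forall\alpha.T_1\Rightarrow\forall\alpha.T_2\rangle^\ell v\rightsquigarrow\Lambda\alpha.\langle T_1\Rightarrow T_2\rangle^\ell(v\,\alpha)$; $\langle\{x{:}T_1\mid e_1\}\Rightarrow T_2\rangle^\ell v\rightsquigarrow\langle T_1\Rightarrow T_2\rangle^\ell v$; $\langle T_1\Rightarrow\{x{:}T_2\mid e_2\}\rangle^\ell v\rightsquigarrow\langle\!\langle\{x{:}T_2\mid e_2\},\langle T_1\Rightarrow T_2\rangle^\ell v\rangle\!\rangle^\ell$ provided $T_1$ is not a refinement type; $\langle\!\langle\{x{:}T\mid e\},v\rangle\!\rangle^\ell\rightsquigarrow\langle\{x{:}T\mid e\},e[v/x],v\rangle^\ell$; $\langle\{x{:}T\mid e\},\mathsf{true},v\rangle^\ell\rightsquigarrow v$; $\langle\{x{:}T\mid e\},\mathsf{false},v\rangle^\ell\rightsquigarrow\Uparrow\ell$. Evaluation contexts: $E ::= [\,] \mid \mathtt{op}(v_1,\dots,v_n,E,e_1,\dots,e_m)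 \mid E\,e \mid v\,E \mid E\,T \mid \langle\!\langle\{x{:}T\mid e\},E\rangle\!\rangle^\ell \mid \langle\{x{:}T\mid e\},E,v\rangle^\ell$. Evaluation $\longrightarrow$: $E[e_1]\longrightarrow E[e_2]$ whenever $e_1\rightsquigarrow e_2$; $E[\Uparrow\ell]\longrightarrow\Uparrow\ell$ whenever $E\neq[\,]$. $\longrightarrow^*$ is the reflexive–transitive closure of $\longrightarrow$.
   Formalization: The lemma carries the extra hypothesis that the variable x does not occur free in the term $e_1$. The paper assumes this as well. *)

theory Defs
  imports Main
begin

text \<open>Locally nameless syntax of F_H. Bound term variables (bound by lambda,
dependent arrows and refinement types) and bound type variables (bound by
type abstraction and universal types) are de Bruijn indices in two separate
index spaces; free term and type variables are names (nat).
Parameters: 'b extra base types, 'k extra constants, 'o primitive operations,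
'l blame labels.\<close>

datatype 'b base = BBool | BOther 'b

datatype 'k const = CTrue | CFalse | CK 'k

datatype ('b,'k,'o,'l) ty =
    TBase "'b base"
  | TFVar nat
  | TBVar nat
  | TArr "('b,'k,'o,'l) ty" "('b,'k,'o,'l) ty"   (* x:T1 -> T2, T2 binds term index 0 *)
  | TAll "('b,'k,'o,'l) ty"      (* forall a. T, T binds type index 0 *)
  | TRef "('b,'k,'o,'l) ty" "('b,'k,'o,'l) tm"   (* {x:T | e}, e binds term index 0 *)
and ('b,'k,'o,'l) tm =
    Const "'k const"
  | BVar nat
  | FVar nat
  | Op 'o "('b,'k,'o,'l) tm list"
  | Lam "('b,'k,'o,'l) ty" "('b,'k,'o,'l) tm"   (* body binds term index 0 *)
  | TLam "('b,'k,'o,'l) tm"                     (* body binds type index 0 *)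
  | Cast "('b,'k,'o,'l) ty" "('b,'k,'o,'l) ty" 'l
  | App "('b,'k,'o,'l) tm" "('b,'k,'o,'l) tm"
  | TApp "('b,'k,'o,'l) tm" "('b,'k,'o,'l) ty"
  | Wait "('b,'k,'o,'l) ty" "('b,'k,'o,'l) tm" "('b,'k,'o,'l) tm" 'l
      (* Wait T e1 e2 l = <<{x:T|e1}, e2>>^l ; e1 binds term index 0 *)
  | Active "('b,'k,'o,'l) ty" "('b,'k,'o,'l) tm" "('b,'k,'o,'l) tm" "('b,'k,'o,'l) tm" 'l
      (* Active T e1 e2 v l = <{x:T|e1}, e2, v>^l ; e1 binds term index 0 *)
  | Blame 'l

fun is_val :: "('b,'k,'o,'l) tm \<Rightarrow> bool" where
  "is_val (Const _) = True"
| "is_val (Lam _ _) = True"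
| "is_val (TLam _) = True"
| "is_val (Cast _ _ _) = True"
| "is_val _ = False"

fun is_ref :: "('b,'k,'o,'l) ty \<Rightarrow> bool" where
  "is_ref (TRef _ _) = True"
| "is_ref _ = False"

primrec open_ty :: "nat \<Rightarrow> ('b,'k,'o,'l) tm \<Rightarrow> ('b,'k,'o,'l) ty \<Rightarrow> ('b,'k,'o,'l) ty"
and open_tm :: "nat \<Rightarrow> ('b,'k,'o,'l) tm \<Rightarrow> ('b,'k,'o,'l) tm \<Rightarrow> ('b,'k,'o,'l) tm" where
  "open_ty k u (TBase B) = TBase B"
| "open_ty k u (TFVar a) = TFVar a"
| "open_ty k u (TBVar i) = TBVar i"
| "open_ty k u (TArr T1 T2) = TArr (open_ty k u T1) (open_ty (Suc k) u T2)"
| "open_ty k u (TAll T) = TAll (open_ty k u T)"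
| "open_ty k u (TRef T e) = TRef (open_ty k u T) (open_tm (Suc k) u e)"
| "open_tm k u (Const c) = Const c"
| "open_tm k u (BVar i) = (if i = k then u else BVar i)"
| "open_tm k u (FVar y) = FVar y"
| "open_tm k u (Op f es) = Op f (map (open_tm k u) es)"
| "open_tm k u (Lam T e) = Lam (open_ty k u T) (open_tm (Suc k) u e)"
| "open_tm k u (TLam e) = TLam (open_tm k u e)"
| "open_tm k u (Cast T1 T2 l) = Cast (open_ty k u T1) (open_ty k u T2) l"
| "open_tm k u (App e1 e2) = App (open_tm k u e1) (open_tm k u e2)"
| "open_tm k u (TApp e T) = TApp (open_tm k u e) (open_ty k u T)"
| "open_tm k u (Wait T e1 e2 l) = Wait (open_ty k u T) (open_tm (Suc k) u e1) (open_tm k u e2) l"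
| "open_tm k u (Active T e1 e2 e3 l) =
     Active (open_ty k u T) (open_tm (Suc k) u e1) (open_tm k u e2) (open_tm k u e3) l"
| "open_tm k u (Blame l) = Blame l"

primrec topen_ty :: "nat \<Rightarrow> ('b,'k,'o,'l) ty \<Rightarrow> ('b,'k,'o,'l) ty \<Rightarrow> ('b,'k,'o,'l) ty"
and topen_tm :: "nat \<Rightarrow> ('b,'k,'o,'l) ty \<Rightarrow> ('b,'k,'o,'l) tm \<Rightarrow> ('b,'k,'o,'l) tm" where
  "topen_ty k U (TBase B) = TBase B"
| "topen_ty k U (TFVar a) = TFVar a"
| "topen_ty k U (TBVar i) = (if i = k then U else TBVar i)"
| "topen_ty k U (TArr T1 T2) = TArr (topen_ty k U T1) (topen_ty k U T2)"
| "topen_ty k U (TAll T) = TAll (topen_ty (Suc k) U T)"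
| "topen_ty k U (TRef T e) = TRef (topen_ty k U T) (topen_tm k U e)"
| "topen_tm k U (Const c) = Const c"
| "topen_tm k U (BVar i) = BVar i"
| "topen_tm k U (FVar y) = FVar y"
| "topen_tm k U (Op f es) = Op f (map (topen_tm k U) es)"
| "topen_tm k U (Lam T e) = Lam (topen_ty k U T) (topen_tm k U e)"
| "topen_tm k U (TLam e) = TLam (topen_tm (Suc k) U e)"
| "topen_tm k U (Cast T1 T2 l) = Cast (topen_ty k U T1) (topen_ty k U T2) l"
| "topen_tm k U (App e1 e2) = App (topen_tm k U e1) (topen_tm k U e2)"
| "topen_tm k U (TApp e T) = TApp (topen_tm k U e) (topen_ty k U T)"
| "topen_tm k U (Wait T e1 e2 l) = Wait (topen_ty k U T) (topen_tm k U e1) (topen_tm k U e2) l"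
| "topen_tm k U (Active T e1 e2 e3 l) =
     Active (topen_ty k U T) (topen_tm k U e1) (topen_tm k U e2) (topen_tm k U e3) l"
| "topen_tm k U (Blame l) = Blame l"

primrec shift_ty :: "nat \<Rightarrow> ('b,'k,'o,'l) ty \<Rightarrow> ('b,'k,'o,'l) ty"
and shift_tm :: "nat \<Rightarrow> ('b,'k,'o,'l) tm \<Rightarrow> ('b,'k,'o,'l) tm" where
  "shift_ty c (TBase B) = TBase B"
| "shift_ty c (TFVar a) = TFVar a"
| "shift_ty c (TBVar i) = TBVar i"
| "shift_ty c (TArr T1 T2) = TArr (shift_ty c T1) (shift_ty (Suc c) T2)"
| "shift_ty c (TAll T) = TAll (shift_ty c T)"
| "shift_ty c (TRef T e) = TRef (shift_ty c T) (shift_tm (Suc c) e)"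
| "shift_tm c (Const k) = Const k"
| "shift_tm c (BVar i) = (if c \<le> i then BVar (Suc i) else BVar i)"
| "shift_tm c (FVar y) = FVar y"
| "shift_tm c (Op f es) = Op f (map (shift_tm c) es)"
| "shift_tm c (Lam T e) = Lam (shift_ty c T) (shift_tm (Suc c) e)"
| "shift_tm c (TLam e) = TLam (shift_tm c e)"
| "shift_tm c (Cast T1 T2 l) = Cast (shift_ty c T1) (shift_ty c T2) l"
| "shift_tm c (App e1 e2) = App (shift_tm c e1) (shift_tm c e2)"
| "shift_tm c (TApp e T) = TApp (shift_tm c e) (shift_ty c T)"
| "shift_tm c (Wait T e1 e2 l) = Wait (shift_ty c T) (shift_tm (Suc c) e1) (shift_tm c e2) l"
| "shift_tm c (Active T e1 e2 e3 l) =
     Active (shift_ty c T) (shift_tm (Suc c) e1) (shift_tm c e2) (shift_tm c e3) l"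
| "shift_tm c (Blame l) = Blame l"

text \<open>Substitution e[u/x] of a term for a free term variable (name) x.
Capture is impossible in the locally nameless representation when u is a
(locally closed) term.\<close>
primrec subst_ty :: "nat \<Rightarrow> ('b,'k,'o,'l) tm \<Rightarrow> ('b,'k,'o,'l) ty \<Rightarrow> ('b,'k,'o,'l) ty"
and subst_tm :: "nat \<Rightarrow> ('b,'k,'o,'l) tm \<Rightarrow> ('b,'k,'o,'l) tm \<Rightarrow> ('b,'k,'o,'l) tm" where
  "subst_ty x u (TBase B) = TBase B"
| "subst_ty x u (TFVar a) = TFVar a"
| "subst_ty x u (TBVar i) = TBVar i"
| "subst_ty x u (TArr T1 T2) = TArr (subst_ty x u T1) (subst_ty x u T2)"
| "subst_ty x u (TAll T) = TAll (subst_ty x u T)"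
| "subst_ty x u (TRef T e) = TRef (subst_ty x u T) (subst_tm x u e)"
| "subst_tm x u (Const c) = Const c"
| "subst_tm x u (BVar i) = BVar i"
| "subst_tm x u (FVar y) = (if y = x then u else FVar y)"
| "subst_tm x u (Op f es) = Op f (map (subst_tm x u) es)"
| "subst_tm x u (Lam T e) = Lam (subst_ty x u T) (subst_tm x u e)"
| "subst_tm x u (TLam e) = TLam (subst_tm x u e)"
| "subst_tm x u (Cast T1 T2 l) = Cast (subst_ty x u T1) (subst_ty x u T2) l"
| "subst_tm x u (App e1 e2) = App (subst_tm x u e1) (subst_tm x u e2)"
| "subst_tm x u (TApp e T) = TApp (subst_tm x u e) (subst_ty x u T)"
| "subst_tm x u (Wait T e1 e2 l) = Wait (subst_ty x u T) (subst_tm x u e1) (subst_tm x u e2) l"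
| "subst_tm x u (Active T e1 e2 e3 l) =
     Active (subst_ty x u T) (subst_tm x u e1) (subst_tm x u e2) (subst_tm x u e3) l"
| "subst_tm x u (Blame l) = Blame l"

primrec fv_ty :: "('b,'k,'o,'l) ty \<Rightarrow> nat set"
and fv_tm :: "('b,'k,'o,'l) tm \<Rightarrow> nat set" where
  "fv_ty (TBase B) = {}"
| "fv_ty (TFVar a) = {}"
| "fv_ty (TBVar i) = {}"
| "fv_ty (TArr T1 T2) = fv_ty T1 \<union> fv_ty T2"
| "fv_ty (TAll T) = fv_ty T"
| "fv_ty (TRef T e) = fv_ty T \<union> fv_tm e"
| "fv_tm (Const c) = {}"
| "fv_tm (BVar i) = {}"
| "fv_tm (FVar y) = {y}"
| "fv_tm (Op f es) = \<Union> (set (map fv_tm es))"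
| "fv_tm (Lam T e) = fv_ty T \<union> fv_tm e"
| "fv_tm (TLam e) = fv_tm e"
| "fv_tm (Cast T1 T2 l) = fv_ty T1 \<union> fv_ty T2"
| "fv_tm (App e1 e2) = fv_tm e1 \<union> fv_tm e2"
| "fv_tm (TApp e T) = fv_tm e \<union> fv_ty T"
| "fv_tm (Wait T e1 e2 l) = fv_ty T \<union> fv_tm e1 \<union> fv_tm e2"
| "fv_tm (Active T e1 e2 e3 l) = fv_ty T \<union> fv_tm e1 \<union> fv_tm e2 \<union> fv_tm e3"
| "fv_tm (Blame l) = {}"

text \<open>Well-formedness: all term indices below n, all type indices below m, and
the third component of an active check is a value (as the grammar demands).
Terms of F_H are the pre-terms with wf_tm 0 0.\<close>
primrec wf_ty :: "nat \<Rightarrow> nat \<Rightarrow> ('b,'k,'o,'l) ty \<Rightarrow> bool"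
and wf_tm :: "nat \<Rightarrow> nat \<Rightarrow> ('b,'k,'o,'l) tm \<Rightarrow> bool" where
  "wf_ty n m (TBase B) = True"
| "wf_ty n m (TFVar a) = True"
| "wf_ty n m (TBVar i) = (i < m)"
| "wf_ty n m (TArr T1 T2) = (wf_ty n m T1 \<and> wf_ty (Suc n) m T2)"
| "wf_ty n m (TAll T) = wf_ty n (Suc m) T"
| "wf_ty n m (TRef T e) = (wf_ty n m T \<and> wf_tm (Suc n) m e)"
| "wf_tm n m (Const c) = True"
| "wf_tm n m (BVar i) = (i < n)"
| "wf_tm n m (FVar y) = True"
| "wf_tm n m (Op f es) = list_all (wf_tm n m) es"
| "wf_tm n m (Lam T e) = (wf_ty n m T \<and> wf_tm (Suc n) m e)"
| "wf_tm n m (TLam e) = wf_tm n (Suc m) e"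
| "wf_tm n m (Cast T1 T2 l) = (wf_ty n m T1 \<and> wf_ty n m T2)"
| "wf_tm n m (App e1 e2) = (wf_tm n m e1 \<and> wf_tm n m e2)"
| "wf_tm n m (TApp e T) = (wf_tm n m e \<and> wf_ty n m T)"
| "wf_tm n m (Wait T e1 e2 l) = (wf_ty n m T \<and> wf_tm (Suc n) m e1 \<and> wf_tm n m e2)"
| "wf_tm n m (Active T e1 e2 e3 l) =
     (wf_ty n m T \<and> wf_tm (Suc n) m e1 \<and> wf_tm n m e2 \<and> wf_tm n m e3 \<and> is_val e3)"
| "wf_tm n m (Blame l) = True"

definition is_term :: "('b,'k,'o,'l) tm \<Rightarrow> bool" where
  "is_term e \<longleftrightarrow> wf_tm 0 0 e"

text \<open>Basic reduction, parameterised by the denotation \<delta> of primitive operations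
(a partial function from tuples of constants to constants).\<close>
inductive red :: "('o \<Rightarrow> 'k const list \<Rightarrow> 'k const option)
    \<Rightarrow> ('b,'k,'o,'l) tm \<Rightarrow> ('b,'k,'o,'l) tm \<Rightarrow> bool" for \<delta> where
  R_Op: "\<delta> f ks = Some k \<Longrightarrow> red \<delta> (Op f (map Const ks)) (Const k)"
| R_Beta: "is_val v \<Longrightarrow> red \<delta> (App (Lam T e) v) (open_tm 0 v e)"
| R_TBeta: "red \<delta> (TApp (TLam e) T) (topen_tm 0 T e)"
| R_Base: "is_val v \<Longrightarrow> red \<delta> (App (Cast (TBase B) (TBase B) l) v) v"
| R_Fun: "is_val v \<Longrightarrow> red \<delta> (App (Cast (TArr T11 T12) (TArr T21 T22) l) v)
     (Lam T21
        (App (Lam T11 (App (Cast T12 (shift_ty 0 T22) l) (App v (BVar 0))))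
             (App (Cast T21 T11 l) (BVar 0))))"
| R_Forall: "is_val v \<Longrightarrow> red \<delta> (App (Cast (TAll T1) (TAll T2) l) v)
     (TLam (App (Cast T1 T2 l) (TApp v (TBVar 0))))"
| R_Forget: "is_val v \<Longrightarrow> red \<delta> (App (Cast (TRef T1 e1) T2 l) v) (App (Cast T1 T2 l) v)"
| R_PreCheck: "\<lbrakk>is_val v; \<not> is_ref T1\<rbrakk> \<Longrightarrow>
     red \<delta> (App (Cast T1 (TRef T2 e2) l) v) (Wait T2 e2 (App (Cast T1 T2 l) v) l)"
| R_Check: "is_val v \<Longrightarrow> red \<delta> (Wait T e v l) (Active T e (open_tm 0 v e) v l)"
| R_OK: "red \<delta> (Active T e (Const CTrue) v l) v"
| R_Fail: "red \<delta> (Active T e (Const CFalse) v l) (Blame l)"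

datatype ('b,'k,'o,'l) ctx =
    Hole
  | COp 'o "('b,'k,'o,'l) tm list" "('b,'k,'o,'l) ctx" "('b,'k,'o,'l) tm list"
  | CAppL "('b,'k,'o,'l) ctx" "('b,'k,'o,'l) tm"
  | CAppR "('b,'k,'o,'l) tm" "('b,'k,'o,'l) ctx"
  | CTApp "('b,'k,'o,'l) ctx" "('b,'k,'o,'l) ty"
  | CWait "('b,'k,'o,'l) ty" "('b,'k,'o,'l) tm" "('b,'k,'o,'l) ctx" 'l
  | CActive "('b,'k,'o,'l) ty" "('b,'k,'o,'l) tm" "('b,'k,'o,'l) ctx" "('b,'k,'o,'l) tm" 'l

primrec ectx :: "('b,'k,'o,'l) ctx \<Rightarrow> bool" where
  "ectx Hole = True"
| "ectx (COp f vs E es) = (list_all is_val vs \<and> ectx E)"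
| "ectx (CAppL E e) = ectx E"
| "ectx (CAppR v E) = (is_val v \<and> ectx E)"
| "ectx (CTApp E T) = ectx E"
| "ectx (CWait T e E l) = ectx E"
| "ectx (CActive T e E v l) = (is_val v \<and> ectx E)"

primrec plug :: "('b,'k,'o,'l) ctx \<Rightarrow> ('b,'k,'o,'l) tm \<Rightarrow> ('b,'k,'o,'l) tm" where
  "plug Hole t = t"
| "plug (COp f vs E es) t = Op f (vs @ [plug E t] @ es)"
| "plug (CAppL E e) t = App (plug E t) e"
| "plug (CAppR v E) t = App v (plug E t)"
| "plug (CTApp E T) t = TApp (plug E t) T"
| "plug (CWait T e E l) t = Wait T e (plug E t) l"
| "plug (CActive T e E v l) t = Active T e (plug E t) v l"

inductive eval :: "('o \<Rightarrow> 'k const list \<Rightarrow> 'k const option)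
    \<Rightarrow> ('b,'k,'o,'l) tm \<Rightarrow> ('b,'k,'o,'l) tm \<Rightarrow> bool" for \<delta> where
  E_Red: "\<lbrakk>ectx E; red \<delta> e1 e2\<rbrakk> \<Longrightarrow> eval \<delta> (plug E e1) (plug E e2)"
| E_Blame: "\<lbrakk>ectx E; E \<noteq> Hole\<rbrakk> \<Longrightarrow> eval \<delta> (plug E (Blame l)) (Blame l)"

abbreviation evals :: "('o \<Rightarrow> 'k const list \<Rightarrow> 'k const option)
    \<Rightarrow> ('b,'k,'o,'l) tm \<Rightarrow> ('b,'k,'o,'l) tm \<Rightarrow> bool" where
  "evals \<delta> \<equiv> (eval \<delta>)\<^sup>*\<^sup>*"

end

theory Submission
  imports Defs
begin

text \<open>Write \<open>e[e1/x] = E[r]\<close> with \<open>E\<close> an evaluation context and \<open>r\<close> a redex or blame.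
Since \<open>e1\<close> steps, it is not a value, so substituting it for \<open>x\<close> creates no new values and
hence no new redexes. Either the redex already occurs in \<open>e\<close> at a position other than \<open>x\<close>,
\<open>e = E0[t0]\<close>; then \<open>t0[e2/x]\<close> contracts in the same way and \<open>e[e2/x]\<close> takes the
corresponding step. Or the decomposition passes through an occurrence of \<open>x\<close> in evaluation
position, \<open>e = E0[x]\<close> and \<open>e1 = E1[r]\<close>; then by determinism the step of \<open>e[e1/x]\<close> is
the step \<open>e1 \<longrightarrow> e2\<close> in place, and \<open>e' = E0[e2]\<close> closes the diagram without further
steps. Blame propagates in the same way.\<close>

section \<open>Substitution and the locally nameless operations\<close>

lemma open_wf_id:
  fixes T :: "('b,'k,'o,'l) ty" and t :: "('b,'k,'o,'l) tm"
  shows "wf_ty n m T \<Longrightarrow> n \<le> k \<Longrightarrow> open_ty k w T = T"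
    and "wf_tm n m t \<Longrightarrow> n \<le> k \<Longrightarrow> open_tm k w t = t"
  by (induct T and t arbitrary: n m k and n m k) (auto simp: list_all_iff intro!: map_idI)

lemma topen_wf_id:
  fixes T :: "('b,'k,'o,'l) ty" and t :: "('b,'k,'o,'l) tm"
  shows "wf_ty n m T \<Longrightarrow> m \<le> k \<Longrightarrow> topen_ty k W T = T"
    and "wf_tm n m t \<Longrightarrow> m \<le> k \<Longrightarrow> topen_tm k W t = t"
  by (induct T and t arbitrary: n m k and n m k) (auto simp: list_all_iff intro!: map_idI)

lemma shift_wf_id:
  fixes T :: "('b,'k,'o,'l) ty" and t :: "('b,'k,'o,'l) tm"
  shows "wf_ty n m T \<Longrightarrow> n \<le> k \<Longrightarrow> shift_ty k T = T"
    and "wf_tm n m t \<Longrightarrow> n \<le> k \<Longrightarrow> shift_tm k t = t"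
  by (induct T and t arbitrary: n m k and n m k) (auto simp: list_all_iff intro!: map_idI)

lemma subst_open:
  fixes T :: "('b,'k,'o,'l) ty" and t :: "('b,'k,'o,'l) tm"
  assumes "wf_tm 0 0 u"
  shows "subst_ty x u (open_ty k v T) = open_ty k (subst_tm x u v) (subst_ty x u T)"
    and "subst_tm x u (open_tm k v t) = open_tm k (subst_tm x u v) (subst_tm x u t)"
  by (induct T and t arbitrary: k and k) (auto simp: open_wf_id(2)[OF assms])

lemma subst_topen:
  fixes T :: "('b,'k,'o,'l) ty" and t :: "('b,'k,'o,'l) tm"
  assumes "wf_tm 0 0 u"
  shows "subst_ty x u (topen_ty k V T) = topen_ty k (subst_ty x u V) (subst_ty x u T)"
    and "subst_tm x u (topen_tm k V t) = topen_tm k (subst_ty x u V) (subst_tm x u t)"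
  by (induct T and t arbitrary: k and k) (auto simp: topen_wf_id(2)[OF assms])

lemma subst_shift:
  fixes T :: "('b,'k,'o,'l) ty" and t :: "('b,'k,'o,'l) tm"
  assumes "wf_tm 0 0 u"
  shows "subst_ty x u (shift_ty k T) = shift_ty k (subst_ty x u T)"
    and "subst_tm x u (shift_tm k t) = shift_tm k (subst_tm x u t)"
  by (induct T and t arbitrary: k and k) (auto simp: shift_wf_id(2)[OF assms])

lemma subst_fresh:
  fixes T :: "('b,'k,'o,'l) ty" and t :: "('b,'k,'o,'l) tm"
  shows "x \<notin> fv_ty T \<Longrightarrow> subst_ty x u T = T"
    and "x \<notin> fv_tm t \<Longrightarrow> subst_tm x u t = t"
  by (induct T and t) (auto intro: map_idI)

lemma fv_open_subset:
  fixes T :: "('b,'k,'o,'l) ty" and t :: "('b,'k,'o,'l) tm"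
  shows "fv_ty (open_ty k u T) \<subseteq> fv_tm u \<union> fv_ty T"
    and "fv_tm (open_tm k u t) \<subseteq> fv_tm u \<union> fv_tm t"
  by (induct T and t arbitrary: k and k) (fastforce split: if_splits)+

lemma fv_topen_subset:
  fixes T :: "('b,'k,'o,'l) ty" and t :: "('b,'k,'o,'l) tm"
  shows "fv_ty (topen_ty k U T) \<subseteq> fv_ty U \<union> fv_ty T"
    and "fv_tm (topen_tm k U t) \<subseteq> fv_ty U \<union> fv_tm t"
  by (induct T and t arbitrary: k and k) (fastforce split: if_splits)+

lemma fv_shift:
  fixes T :: "('b,'k,'o,'l) ty" and t :: "('b,'k,'o,'l) tm"
  shows "fv_ty (shift_ty k T) = fv_ty T"
    and "fv_tm (shift_tm k t) = fv_tm t"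
  by (induct T and t arbitrary: k and k) auto

lemma is_val_subst: "is_val v \<Longrightarrow> is_val (subst_tm x u v)"
  by (cases v) auto

lemma is_val_subst_nonval_iff: "\<not> is_val u \<Longrightarrow> is_val (subst_tm x u v) \<longleftrightarrow> is_val v"
  by (cases v) auto

lemma is_ref_subst: "is_ref (subst_ty x u T) = is_ref T"
  by (cases T) auto

lemma wf_of_wf_subst:
  fixes T :: "('b,'k,'o,'l) ty" and t :: "('b,'k,'o,'l) tm"
  assumes "\<not> is_val u"
  shows "wf_ty n m (subst_ty x u T) \<Longrightarrow> wf_ty n m T"
    and "wf_tm n m (subst_tm x u t) \<Longrightarrow> wf_tm n m t"
  by (induct T and t arbitrary: n m and n m)
     (auto simp: list_all_iff is_val_subst_nonval_iff[OF assms])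

lemma subst_ty_eq_iff:
  "subst_ty x u A = TBase B \<longleftrightarrow> A = TBase B"
  "subst_ty x u A = TArr T1 T2 \<longleftrightarrow>
     (\<exists>A1 A2. A = TArr A1 A2 \<and> subst_ty x u A1 = T1 \<and> subst_ty x u A2 = T2)"
  "subst_ty x u A = TAll T \<longleftrightarrow> (\<exists>A'. A = TAll A' \<and> subst_ty x u A' = T)"
  "subst_ty x u A = TRef T e \<longleftrightarrow>
     (\<exists>A' e'. A = TRef A' e' \<and> subst_ty x u A' = T \<and> subst_tm x u e' = e)"
  by (cases A; auto)+

lemma subst_tm_eq_val_iff:
  assumes "\<not> is_val u"
  shows "subst_tm x u a = Const c \<longleftrightarrow> a = Const c"
    and "subst_tm x u a = Lam T b \<longleftrightarrow>
           (\<exists>T' b'. a = Lam T' b' \<and> subst_ty x u T' = T \<and> subst_tm x u b' = b)"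
    and "subst_tm x u a = TLam b \<longleftrightarrow> (\<exists>b'. a = TLam b' \<and> subst_tm x u b' = b)"
    and "subst_tm x u a = Cast T1 T2 l \<longleftrightarrow>
           (\<exists>T1' T2'. a = Cast T1' T2' l \<and> subst_ty x u T1' = T1 \<and> subst_ty x u T2' = T2)"
  using assms by (cases a; auto)+

lemma map_subst_eq_map_Const:
  "\<not> is_val u \<Longrightarrow> map (subst_tm x u) as = map Const ks \<longleftrightarrow> as = map Const ks"
  by (induct as arbitrary: ks) (auto simp: Cons_eq_map_conv subst_tm_eq_val_iff)

lemma red_subst_cast:
  assumes red: "red \<delta> (App (Cast (subst_ty x u A1) (subst_ty x u A2) l) (subst_tm x u c)) r"
    and c: "is_val c" and u: "wf_tm 0 0 u" and u': "wf_tm 0 0 u'"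
  shows "\<exists>r0. r = subst_tm x u r0 \<and>
    red \<delta> (App (Cast (subst_ty x u' A1) (subst_ty x u' A2) l) (subst_tm x u' c)) (subst_tm x u' r0)"
  using red
proof cases
  case (R_Base B)
  then show ?thesis using c
    by (intro exI[of _ c]) (auto simp: subst_ty_eq_iff is_val_subst intro: red.intros)
next
  case (R_Fun T11 T12 T21 T22)
  then obtain A11 A12 A21 A22 where "A1 = TArr A11 A12" "A2 = TArr A21 A22"
    "subst_ty x u A11 = T11" "subst_ty x u A12 = T12" "subst_ty x u A21 = T21" "subst_ty x u A22 = T22"
    by (auto simp: subst_ty_eq_iff)
  then show ?thesis using R_Fun c u u'
    by (intro exI[of _ "Lam A21 (App (Lam A11 (App (Cast A12 (shift_ty 0 A22) l) (App c (BVar 0))))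
                                     (App (Cast A21 A11 l) (BVar 0)))"])
       (auto simp: subst_shift is_val_subst intro: red.intros)
next
  case (R_Forall T1 T2)
  then obtain B1 B2 where "A1 = TAll B1" "A2 = TAll B2" "subst_ty x u B1 = T1" "subst_ty x u B2 = T2"
    by (auto simp: subst_ty_eq_iff)
  then show ?thesis using R_Forall c
    by (intro exI[of _ "TLam (App (Cast B1 B2 l) (TApp c (TBVar 0)))"])
       (auto simp: is_val_subst intro: red.intros)
next
  case (R_Forget T1 e1)
  then obtain B1 b1 where "A1 = TRef B1 b1" "subst_ty x u B1 = T1"
    by (auto simp: subst_ty_eq_iff)
  then show ?thesis using R_Forget c
    by (intro exI[of _ "App (Cast B1 A2 l) c"]) (auto simp: is_val_subst intro: red.intros)
next
  case (R_PreCheck T2 e2)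
  then obtain B2 b2 where "A2 = TRef B2 b2" "subst_ty x u B2 = T2" "subst_tm x u b2 = e2"
    by (auto simp: subst_ty_eq_iff)
  then show ?thesis using R_PreCheck c
    by (intro exI[of _ "Wait B2 b2 (App (Cast A1 B2 l) c) l"])
       (auto simp: is_val_subst is_ref_subst intro: red.intros)
qed

lemma red_subst:
  assumes red: "red \<delta> (subst_tm x u e) r" and e: "e \<noteq> FVar x"
    and u: "\<not> is_val u" "wf_tm 0 0 u" and u': "wf_tm 0 0 u'"
  shows "\<exists>r0. r = subst_tm x u r0 \<and> red \<delta> (subst_tm x u' e) (subst_tm x u' r0)"
proof -
  have cast_app: ?thesis if v: "subst_tm x u e = App (Cast T1 T2 l) v" "is_val v" for T1 T2 l v
  proof -
    obtain A1 A2 c where "e = App (Cast A1 A2 l) c" "is_val c"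
      using v e u by (cases e) (auto simp: subst_tm_eq_val_iff is_val_subst_nonval_iff)
    then show ?thesis using red_subst_cast red u u' by simp
  qed
  from red show ?thesis
  proof cases
    case (R_Op f ks k)
    then show ?thesis using e u
      by (cases e) (auto simp: map_subst_eq_map_Const comp_def intro!: exI[of _ "Const k"] red.intros)
  next
    case (R_Beta v T b)
    then obtain T0 b0 c where "e = App (Lam T0 b0) c" "is_val c"
      "subst_ty x u T0 = T" "subst_tm x u b0 = b" "subst_tm x u c = v"
      using e u by (cases e) (auto simp: subst_tm_eq_val_iff is_val_subst_nonval_iff)
    then show ?thesis using R_Beta u u'
      by (intro exI[of _ "open_tm 0 c b0"]) (auto simp: subst_open is_val_subst intro: red.intros)
  next
    case (R_TBeta b T)
    then obtain b0 T0 where "e = TApp (TLam b0) T0" "subst_tm x u b0 = b" "subst_ty x u T0 = T"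
      using e u by (cases e) (auto simp: subst_tm_eq_val_iff)
    then show ?thesis using R_TBeta u u'
      by (intro exI[of _ "topen_tm 0 T0 b0"]) (auto simp: subst_topen intro: red.intros)
  next
    case (R_Check v T b l)
    then obtain T0 b0 c where "e = Wait T0 b0 c l" "is_val c" "subst_tm x u c = v"
      "subst_ty x u T0 = T" "subst_tm x u b0 = b"
      using e u by (cases e) (auto simp: is_val_subst_nonval_iff)
    then show ?thesis using R_Check u u'
      by (intro exI[of _ "Active T0 b0 (open_tm 0 c b0) c l"])
         (auto simp: subst_open is_val_subst intro: red.intros)
  next
    case (R_OK T b l)
    then obtain T0 b0 c where "e = Active T0 b0 (Const CTrue) c l" "subst_tm x u c = r"
      using e u by (cases e) (auto simp: subst_tm_eq_val_iff)
    then show ?thesis by (intro exI[of _ c]) (auto intro: red.intros)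
  next
    case (R_Fail T b v l)
    then obtain T0 b0 c where "e = Active T0 b0 (Const CFalse) c l"
      using e u by (cases e) (auto simp: subst_tm_eq_val_iff)
    then show ?thesis using R_Fail by (intro exI[of _ "Blame l"]) (auto intro: red.intros)
  qed (rule cast_app; assumption)+
qed

section \<open>Evaluation contexts\<close>

primrec subst_ctx :: "nat \<Rightarrow> ('b,'k,'o,'l) tm \<Rightarrow> ('b,'k,'o,'l) ctx \<Rightarrow> ('b,'k,'o,'l) ctx" where
  "subst_ctx x u Hole = Hole"
| "subst_ctx x u (COp f vs E es) = COp f (map (subst_tm x u) vs) (subst_ctx x u E) (map (subst_tm x u) es)"
| "subst_ctx x u (CAppL E e) = CAppL (subst_ctx x u E) (subst_tm x u e)"
| "subst_ctx x u (CAppR v E) = CAppR (subst_tm x u v) (subst_ctx x u E)"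
| "subst_ctx x u (CTApp E T) = CTApp (subst_ctx x u E) (subst_ty x u T)"
| "subst_ctx x u (CWait T e E l) = CWait (subst_ty x u T) (subst_tm x u e) (subst_ctx x u E) l"
| "subst_ctx x u (CActive T e E v l) =
     CActive (subst_ty x u T) (subst_tm x u e) (subst_ctx x u E) (subst_tm x u v) l"

primrec ctx_comp :: "('b,'k,'o,'l) ctx \<Rightarrow> ('b,'k,'o,'l) ctx \<Rightarrow> ('b,'k,'o,'l) ctx" where
  "ctx_comp Hole F = F"
| "ctx_comp (COp f vs E es) F = COp f vs (ctx_comp E F) es"
| "ctx_comp (CAppL E e) F = CAppL (ctx_comp E F) e"
| "ctx_comp (CAppR v E) F = CAppR v (ctx_comp E F)"
| "ctx_comp (CTApp E T) F = CTApp (ctx_comp E F) T"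
| "ctx_comp (CWait T e E l) F = CWait T e (ctx_comp E F) l"
| "ctx_comp (CActive T e E v l) F = CActive T e (ctx_comp E F) v l"

lemma plug_ctx_comp [simp]: "plug (ctx_comp E F) t = plug E (plug F t)"
  by (induct E) auto

lemma ectx_ctx_comp [simp]: "ectx (ctx_comp E F) \<longleftrightarrow> ectx E \<and> ectx F"
  by (induct E) auto

lemma subst_plug: "subst_tm x u (plug E t) = plug (subst_ctx x u E) (subst_tm x u t)"
  by (induct E) auto

lemma ectx_subst: "ectx E \<Longrightarrow> ectx (subst_ctx x u E)"
  by (induct E) (auto simp: list_all_iff is_val_subst)

lemma ectx_subst_nonval_iff: "\<not> is_val u \<Longrightarrow> ectx (subst_ctx x u E) \<longleftrightarrow> ectx E"
  by (induct E) (auto simp: list_all_iff is_val_subst_nonval_iff)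

lemma subst_ctx_eq_Hole_iff [simp]: "subst_ctx x u E = Hole \<longleftrightarrow> E = Hole"
  by (cases E) auto

lemma is_val_plug: "is_val (plug E t) \<Longrightarrow> E = Hole \<and> is_val t"
  by (cases E) auto

lemma plug_eq_val: "plug E t = v \<Longrightarrow> is_val v \<Longrightarrow> E = Hole \<and> t = v"
  by (cases E) auto

lemma Blame_eq_plug: "Blame l = plug E t \<Longrightarrow> E = Hole"
  by (cases E) auto

lemma red_not_val: "red \<delta> t r \<Longrightarrow> \<not> is_val t"
  by (induct rule: red.induct) auto

lemma red_plug_val: "red \<delta> (plug E t) r \<Longrightarrow> E \<noteq> Hole \<Longrightarrow> is_val t"
  by (cases E) (auto elim!: red.cases dest!: plug_eq_val is_val_plug simp: append_eq_map_conv)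

section \<open>Determinism and other basic properties of evaluation\<close>

definition redex_or_blame :: "('o \<Rightarrow> 'k const list \<Rightarrow> 'k const option) \<Rightarrow> ('b,'k,'o,'l) tm \<Rightarrow> bool" where
  "redex_or_blame \<delta> t \<longleftrightarrow> (\<exists>r. red \<delta> t r) \<or> (\<exists>l. t = Blame l)"

lemma redex_or_blame_plug_not_val: "redex_or_blame \<delta> t \<Longrightarrow> \<not> is_val (plug E t)"
  unfolding redex_or_blame_def using red_not_val is_val_plug by fastforce

lemma redex_or_blame_plug:
  assumes "redex_or_blame \<delta> (plug E t)" and "redex_or_blame \<delta> t"
  shows "E = Hole"
proof (rule ccontr)
  assume "E \<noteq> Hole"
  with assms(1) have "is_val t"
    unfolding redex_or_blame_def by (metis Blame_eq_plug red_plug_val)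
  with assms(2) show False using redex_or_blame_plug_not_val[of \<delta> t Hole] by simp
qed

lemma list_all_append_Cons_eq:
  "list_all P vs1 \<Longrightarrow> list_all P vs2 \<Longrightarrow> \<not> P p1 \<Longrightarrow> \<not> P p2 \<Longrightarrow>
   vs1 @ p1 # es1 = vs2 @ p2 # es2 \<Longrightarrow> vs1 = vs2 \<and> p1 = p2 \<and> es1 = es2"
  by (induct vs1 arbitrary: vs2; case_tac vs2) auto

lemma plug_redex_or_blame_inject:
  assumes "plug E1 t1 = plug E2 t2" "ectx E1" "ectx E2"
    and "redex_or_blame \<delta> t1" "redex_or_blame \<delta> t2"
  shows "E1 = E2 \<and> t1 = t2"
  using assms
proof (induct E1 arbitrary: E2)
  case Hole
  then show ?case using redex_or_blame_plug by (metis plug.simps(1))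
next
  case (COp f vs E es)
  show ?case
  proof (cases E2)
    case E2: (COp g vs' E' es')
    with COp.prems have "vs = vs' \<and> plug E t1 = plug E' t2 \<and> es = es'"
      by (intro list_all_append_Cons_eq[of is_val]) (auto simp: redex_or_blame_plug_not_val)
    with COp.hyps COp.prems E2 show ?thesis by auto
  qed (use COp in \<open>auto dest: redex_or_blame_plug[of \<delta> "COp f vs E es", simplified]\<close>)
next
  case (CAppL E e)
  then show ?case
    by (cases E2) (auto dest: redex_or_blame_plug_not_val redex_or_blame_plug[of \<delta> "CAppL E e", simplified])
next
  case (CAppR v E)
  then show ?case
    by (cases E2) (auto dest: redex_or_blame_plug_not_val redex_or_blame_plug[of \<delta> "CAppR v E", simplified])
next
  case (CTApp E T)
  then show ?case
    by (cases E2) (auto dest: redex_or_blame_plug[of \<delta> "CTApp E T", simplified])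
next
  case (CWait T e E l)
  then show ?case
    by (cases E2) (auto dest: redex_or_blame_plug[of \<delta> "CWait T e E l", simplified])
next
  case (CActive T e E v l)
  then show ?case
    by (cases E2) (auto dest: redex_or_blame_plug[of \<delta> "CActive T e E v l", simplified])
qed

lemma red_det: "red \<delta> t r1 \<Longrightarrow> red \<delta> t r2 \<Longrightarrow> r1 = r2"
  by (induct rule: red.induct) (auto elim: red.cases simp: inj_map_eq_map inj_def)

lemma no_red_Blame: "\<not> red \<delta> (Blame l) r"
  by (auto elim: red.cases)

lemma redex_or_blame_if_red: "red \<delta> t r \<Longrightarrow> redex_or_blame \<delta> t"
  and redex_or_blame_Blame: "redex_or_blame \<delta> (Blame l)"
  unfolding redex_or_blame_def by blast+

lemma eval_det:
  assumes "eval \<delta> a b" and "eval \<delta> a c"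
  shows "b = c"
  using assms(1)
proof cases
  case (E_Red E t r)
  from assms(2) show ?thesis
  proof cases
    case (E_Red E' t' r')
    then have "t = t'"
      using \<open>a = plug E t\<close> \<open>ectx E\<close> \<open>red \<delta> t r\<close>
      by (metis plug_redex_or_blame_inject redex_or_blame_if_red)
    then show ?thesis using E_Red \<open>a = plug E t\<close> \<open>ectx E\<close> \<open>red \<delta> t r\<close> \<open>b = plug E r\<close>
      by (metis plug_redex_or_blame_inject redex_or_blame_if_red red_det)
  next
    case (E_Blame E' l)
    then have "t = Blame l"
      using \<open>a = plug E t\<close> \<open>ectx E\<close> \<open>red \<delta> t r\<close>
      by (metis plug_redex_or_blame_inject redex_or_blame_if_red redex_or_blame_Blame)
    then show ?thesis using \<open>red \<delta> t r\<close> no_red_Blame by metis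
  qed
next
  case (E_Blame E l)
  from assms(2) show ?thesis
  proof cases
    case (E_Red E' t' r')
    then have "t' = Blame l"
      using \<open>a = plug E (Blame l)\<close> \<open>ectx E\<close>
      by (metis plug_redex_or_blame_inject redex_or_blame_if_red redex_or_blame_Blame)
    then show ?thesis using \<open>red \<delta> t' r'\<close> no_red_Blame by metis
  next
    case (E_Blame E' l')
    then show ?thesis using \<open>a = plug E (Blame l)\<close> \<open>ectx E\<close> \<open>b = Blame l\<close>
      by (metis plug_redex_or_blame_inject redex_or_blame_Blame)
  qed
qed

lemma fv_red: "red \<delta> t r \<Longrightarrow> fv_tm r \<subseteq> fv_tm t"
  by (induct rule: red.induct)
     (auto simp: fv_shift dest!: fv_open_subset(2)[THEN subsetD] fv_topen_subset(2)[THEN subsetD])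

lemma fv_plug_mono: "fv_tm t' \<subseteq> fv_tm t \<Longrightarrow> fv_tm (plug E t') \<subseteq> fv_tm (plug E t)"
  by (induct E) auto

lemma fv_eval: "eval \<delta> a b \<Longrightarrow> fv_tm b \<subseteq> fv_tm a"
  by (induct rule: eval.induct) (simp_all add: fv_plug_mono fv_red)

lemma eval_not_val: "eval \<delta> a b \<Longrightarrow> \<not> is_val a"
  by (induct rule: eval.induct) (auto dest: is_val_plug red_not_val)

lemma no_eval_Blame: "\<not> eval \<delta> (Blame l) b"
  by (metis Blame_eq_plug eval.cases no_red_Blame plug.simps(1))

section \<open>Evaluating a substitution instance\<close>

lemma subst_eq_plug:
  assumes "subst_tm x u e = plug E t"
  shows "(\<exists>E0 t0. e = plug E0 t0 \<and> E = subst_ctx x u E0 \<and> t = subst_tm x u t0 \<and> t0 \<noteq> FVar x) \<or>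
         (\<exists>E0 E1. e = plug E0 (FVar x) \<and> u = plug E1 t \<and> E = ctx_comp (subst_ctx x u E0) E1)"
  using assms
proof (induct E arbitrary: e)
  case Hole
  then show ?case
    by (cases "e = FVar x") (auto intro: exI[of _ Hole])
next
  case (CAppL E' b)
  show ?case
  proof (cases e)
    case (App a c)
    with CAppL.prems CAppL.hyps[of a] show ?thesis
      by (fastforce intro: exI[of _ "CAppL E0 c" for E0])
  qed (use CAppL.prems in \<open>auto split: if_splits intro: exI[of _ Hole]\<close>)
next
  case (CAppR v E')
  show ?case
  proof (cases e)
    case (App c a)
    with CAppR.prems CAppR.hyps[of a] show ?thesis
      by (fastforce intro: exI[of _ "CAppR c E0" for E0])
  qed (use CAppR.prems in \<open>auto split: if_splits intro: exI[of _ Hole]\<close>)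
next
  case (COp f vs E' es)
  show ?case
  proof (cases e)
    case (Op g as)
    with COp.prems obtain vs0 a es0 where "as = vs0 @ a # es0" "map (subst_tm x u) vs0 = vs"
       "subst_tm x u a = plug E' t" "map (subst_tm x u) es0 = es"
      by (auto simp: map_eq_append_conv map_eq_Cons_conv)
    with Op COp.prems COp.hyps[of a] show ?thesis
      by (fastforce intro: exI[of _ "COp f vs0 E0 es0" for E0])
  qed (use COp.prems in \<open>auto split: if_splits intro: exI[of _ Hole]\<close>)
next
  case (CTApp E' T)
  show ?case
  proof (cases e)
    case (TApp a T0)
    with CTApp.prems CTApp.hyps[of a] show ?thesis
      by (fastforce intro: exI[of _ "CTApp E0 T0" for E0])
  qed (use CTApp.prems in \<open>auto split: if_splits intro: exI[of _ Hole]\<close>)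
next
  case (CWait T b E' l)
  show ?case
  proof (cases e)
    case (Wait T0 b0 a l0)
    with CWait.prems CWait.hyps[of a] show ?thesis
      by (fastforce intro: exI[of _ "CWait T0 b0 E0 l" for E0])
  qed (use CWait.prems in \<open>auto split: if_splits intro: exI[of _ Hole]\<close>)
next
  case (CActive T b E' v l)
  show ?case
  proof (cases e)
    case (Active T0 b0 a c l0)
    with CActive.prems CActive.hyps[of a] show ?thesis
      by (fastforce intro: exI[of _ "CActive T0 b0 E0 c l" for E0])
  qed (use CActive.prems in \<open>auto split: if_splits intro: exI[of _ Hole]\<close>)
qed

lemma eval_subst_red:
  assumes e: "subst_tm x u e = plug E t" and E: "ectx E" and t: "red \<delta> t r"
    and u: "eval \<delta> u u'" "wf_tm 0 0 u" "wf_tm 0 0 u'" and x: "x \<notin> fv_tm u'"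
  shows "\<exists>e'. plug E r = subst_tm x u e' \<and> evals \<delta> (subst_tm x u' e) (subst_tm x u' e')"
proof -
  have nv: "\<not> is_val u" using u(1) eval_not_val by blast
  from subst_eq_plug[OF e] show ?thesis
  proof (elim disjE exE conjE)
    fix E0 t0
    assume e0: "e = plug E0 t0" and E0: "E = subst_ctx x u E0" and t0: "t = subst_tm x u t0" "t0 \<noteq> FVar x"
    obtain r0 where r0: "r = subst_tm x u r0" "red \<delta> (subst_tm x u' t0) (subst_tm x u' r0)"
      using red_subst t t0 nv u by blast
    have "ectx (subst_ctx x u' E0)" using E E0 nv by (simp add: ectx_subst ectx_subst_nonval_iff)
    then have "eval \<delta> (subst_tm x u' e) (subst_tm x u' (plug E0 r0))"
      unfolding e0 subst_plug using r0(2) by (rule eval.E_Red)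
    moreover have "plug E r = subst_tm x u (plug E0 r0)" by (simp add: E0 r0(1) subst_plug)
    ultimately show ?thesis by blast
  next
    fix E0 E1
    assume e0: "e = plug E0 (FVar x)" and u1: "u = plug E1 t" and E0: "E = ctx_comp (subst_ctx x u E0) E1"
    have "eval \<delta> u (plug E1 r)" using E E0 t u1 by (simp add: eval.E_Red)
    then have u': "u' = plug E1 r" using u(1) eval_det by blast
    have fresh: "subst_tm x w u' = u'" for w using x by (rule subst_fresh(2))
    have "plug E r = subst_tm x u (plug E0 u')"
      unfolding E0 subst_plug fresh using u' by simp
    moreover have "subst_tm x u' e = subst_tm x u' (plug E0 u')"
      unfolding e0 subst_plug fresh by simp
    ultimately show ?thesis by auto
  qed
qed

lemma eval_subst_blame:
  assumes e: "subst_tm x u e = plug E (Blame l)" and E: "ectx E" "E \<noteq> Hole"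
    and u: "eval \<delta> u u'"
  shows "evals \<delta> (subst_tm x u' e) (Blame l)"
proof -
  have nv: "\<not> is_val u" using u eval_not_val by blast
  from subst_eq_plug[OF e] show ?thesis
  proof (elim disjE exE conjE)
    fix E0 t0
    assume e0: "e = plug E0 t0" and E0: "E = subst_ctx x u E0"
      and t0: "Blame l = subst_tm x u t0" "t0 \<noteq> FVar x"
    have "t0 = Blame l" using t0 by (cases t0) (auto split: if_splits)
    moreover have "ectx (subst_ctx x u' E0)" "subst_ctx x u' E0 \<noteq> Hole"
      using E E0 nv by (simp_all add: ectx_subst ectx_subst_nonval_iff)
    ultimately have "eval \<delta> (subst_tm x u' e) (Blame l)"
      unfolding e0 subst_plug by (simp add: eval.E_Blame)
    then show ?thesis by blast
  next
    fix E0 E1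
    assume e0: "e = plug E0 (FVar x)" and u1: "u = plug E1 (Blame l)"
      and E0: "E = ctx_comp (subst_ctx x u E0) E1"
    have "E1 \<noteq> Hole" using u u1 no_eval_Blame by fastforce
    then have "eval \<delta> u (Blame l)" using E E0 u1 by (simp add: eval.E_Blame)
    then have u': "u' = Blame l" using u eval_det by blast
    have "ectx (subst_ctx x u' E0)" using E E0 nv by (simp add: ectx_subst ectx_subst_nonval_iff)
    then show ?thesis
      unfolding e0 subst_plug u' using eval.E_Blame[of "subst_ctx x (Blame l) E0" \<delta> l]
      by (cases "E0 = Hole") auto
  qed
qed

lemma eval_subst:
  assumes "eval \<delta> (subst_tm x u e) s"
    and u: "eval \<delta> u u'" "wf_tm 0 0 u" "wf_tm 0 0 u'" and x: "x \<notin> fv_tm u'"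
  shows "\<exists>e'. s = subst_tm x u e' \<and> evals \<delta> (subst_tm x u' e) (subst_tm x u' e')"
  using assms(1)
proof cases
  case (E_Red E t r)
  then show ?thesis using eval_subst_red u x by metis
next
  case (E_Blame E l)
  then show ?thesis using eval_subst_blame[OF _ _ _ u(1)] by (intro exI[of _ "Blame l"]) auto
qed

theorem mainTheorem3:
  fixes \<delta> :: "'o \<Rightarrow> 'k const list \<Rightarrow> 'k const option"
    and e e1 e2 e1' :: "('b,'k,'o,'l) tm"
    and x :: nat
  assumes "is_term e" and "is_term e1" and "is_term e2" and "is_term e1'"
    and "x \<notin> fv_tm e1"
    and "eval \<delta> e1 e2"
    and "eval \<delta> (subst_tm x e1 e) e1'"
  shows "\<exists>e'. is_term e' \<and> evals \<delta> (subst_tm x e2 e) (subst_tm x e2 e')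
                          \<and> evals \<delta> e1' (subst_tm x e1 e')"
proof -
  have "x \<notin> fv_tm e2" using fv_eval[OF assms(6)] assms(5) by blast
  then obtain e' where e1': "e1' = subst_tm x e1 e'"
    and steps: "evals \<delta> (subst_tm x e2 e) (subst_tm x e2 e')"
    using eval_subst[OF assms(7,6)] assms(2,3) unfolding is_term_def by blast
  have "is_term e'"
    using assms(4,6) e1' eval_not_val wf_of_wf_subst(2) unfolding is_term_def by blast
  with e1' steps show ?thesis by blast
qed

end
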